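(* Let $(V_n)_{n\ge1}$ be a sequence in $\mathcal{V}$ with $\mathcal{L}_{V_n}(0)\to\infty$. The following are equivalent: (1) $(\mathcal{L}_{V_n})$ has a cutoff; (2) for all $\epsilon>0$ and $c>0$, $T_{V_n}(\epsilon)\lambda_{V_n}(c)\to\infty$; (3) there is $\epsilon>0$ such that $T_{V_n}(\epsilon)\lambda_{V_n}(c)\to\infty$ for all $c>0$; (4) for all $c>0$, $\tau_{V_n}(c)\lambda_{V_n}(c)\to\infty$; (5) for all $\tilde c>0$ and $c>0$, $\tau_{V_n}(\tilde c)\lambda_{V_n}(c)\to\infty$; (6) there is $\tilde c>0$ such that $\tau_{V_n}(\tilde c)\lambda_{V_n}(c)\to\infty$ for all $c>0$. Moreover, if $(\mathcal{L}_{V_n})$ has a cutoff, then $\tau_{V_n}(c)$ is a cutoff time for every $c>0$, and \[ |T_{V_n}(\epsilon)-T_{V_n}(\delta)|=O(1/\lambda_{V_n}(c))\quad\forall\epsilon,\delta,c\in(0,\infty), \] \[ |T_{V_n}(\epsilon)-\tau_{V_n}(c)|=O\Big(\sqrt{\tau_{V_n}(c)/\lambda_{V_n}(c)}\Big)\quad\forall\epsilon,c\in(0,\infty). \]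
   Context: $\mathcal{V}$ is the class of non-decreasing right-continuous $V:(0,\infty)\to\mathbb{R}$ with $\lim_{\lambda\to0^+}V(\lambda)=0$, $\lim_{\lambda\to\infty}V(\lambda)<\infty$; $\mathcal{L}_V(t)=\int_{(0,\infty)}e^{-t\lambda}dV(\lambda)$ for $t\ge0$. Mixing time: $T_V(\epsilon)=\min\{t\ge0:\mathcal{L}_V(t)\le\epsilon\}$. For $c\in(0,\mathcal{L}_V(0))$: $\lambda_V(c)=\inf\{\lambda:V(\lambda)>c\}$ and $\tau_V(c)=\sup_{\lambda\ge\lambda_V(c)}\frac{\log(1+V(\lambda))}{\lambda}$ (these are defined for all large $n$ since $\mathcal{L}_{V_n}(0)\to\infty$). Cutoff: with $M=\limsup_n\mathcal{L}_{V_n}(0)$, there exist $t_n>0$ with $\mathcal{L}_{V_n}(at_n)\to0$ for all $a>1$ and $\mathcal{L}_{V_n}(at_n)\to M$ for all $a\in(0,1)$; $t_n$ is then a cutoff time. For positive sequences, $a_n=O(b_n)$ means $\sup_n a_n/b_n<\infty$. *)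

theory Defs
  imports "HOL-Analysis.Analysis" "HOL-Library.Landau_Symbols"
begin

text \<open>The class V: non-decreasing, right-continuous functions on (0,oo) with
  limit 0 at 0+ and a finite limit at +oo.  Values on (-oo,0] are irrelevant.\<close>
definition classV :: "(real \<Rightarrow> real) set" where
  "classV = {V. mono_on {0<..} V
              \<and> (\<forall>l>0. continuous (at_right l) V)
              \<and> (V \<longlongrightarrow> 0) (at_right 0)
              \<and> (\<exists>L. (V \<longlongrightarrow> L) at_top)}"

text \<open>Extension of V by 0 to (-oo,0]; used to build the Lebesgue--Stieltjes measure dV.\<close>
definition extV :: "(real \<Rightarrow> real) \<Rightarrow> real \<Rightarrow> real" where
  "extV V l = (if l > 0 then V l else 0)"

definition LV :: "(real \<Rightarrow> real) \<Rightarrow> real \<Rightarrow> real" where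
  "LV V t = (LINT l:{0<..}|interval_measure (extV V). exp (- t * l))"

definition TV :: "(real \<Rightarrow> real) \<Rightarrow> real \<Rightarrow> real" where
  "TV V eps = (LEAST t. t \<ge> 0 \<and> LV V t \<le> eps)"

definition lamV :: "(real \<Rightarrow> real) \<Rightarrow> real \<Rightarrow> real" where
  "lamV V c = Inf {l. l > 0 \<and> V l > c}"

definition tauV :: "(real \<Rightarrow> real) \<Rightarrow> real \<Rightarrow> real" where
  "tauV V c = (SUP l\<in>{lamV V c..}. ln (1 + V l) / l)"

definition cutoff_time :: "(nat \<Rightarrow> real \<Rightarrow> real) \<Rightarrow> (nat \<Rightarrow> real) \<Rightarrow> bool" where
  "cutoff_time f t \<longleftrightarrow>
     (\<forall>n. t n > 0)
     \<and> (\<forall>a>1. (\<lambda>n. f n (a * t n)) \<longlonglongrightarrow> 0)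
     \<and> (\<forall>a. 0 < a \<and> a < 1 \<longrightarrow>
           (\<lambda>n. ereal (f n (a * t n))) \<longlonglongrightarrow> limsup (\<lambda>n. ereal (f n 0)))"

definition has_cutoff :: "(nat \<Rightarrow> real \<Rightarrow> real) \<Rightarrow> bool" where
  "has_cutoff f \<longleftrightarrow> (\<exists>t. cutoff_time f t)"

end

theory Submission
  imports Defs "HOL-Real_Asymp.Real_Asymp"
begin

text \<open>
  \<open>\<lambda>\<^sub>V(c)\<close> is the scale at which \<open>V\<close> first exceeds \<open>c\<close>, and \<open>\<tau>\<^sub>V(c)\<close> is the exponential
  growth rate of \<open>1 + V\<close> beyond that scale. Upper bounds on \<open>L\<^sub>V\<close> come from step-function
  majorants of \<open>exp (- t l)\<close>: below \<open>\<lambda>\<^sub>V(c') / 2\<close> the mass of \<open>dV\<close> is at most \<open>c'\<close>, and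
  above \<open>\<lambda>\<^sub>V(c)\<close> the bound \<open>1 + V l \<le> exp (\<tau>\<^sub>V(c) l)\<close> turns the tail into a geometric
  series, so \<open>L\<^sub>V(\<tau>\<^sub>V(c) + u)\<close> is small once \<open>u \<lambda>\<^sub>V(c)\<close> is large. Conversely, a point
  \<open>l \<ge> \<lambda>\<^sub>V(c)\<close> where \<open>ln (1 + V l) / l\<close> nearly attains \<open>\<tau>\<^sub>V(c)\<close> gives
  \<open>L\<^sub>V(t) \<ge> exp ((\<tau>\<^sub>V(c) - \<epsilon> - t) \<lambda>\<^sub>V(c)) - 1\<close>.
  Hence, if \<open>\<tau>\<^sub>V(c) \<lambda>\<^sub>V(c) \<rightarrow> \<infinity>\<close>, the transforms fall from \<open>\<infinity>\<close> to \<open>0\<close> within a window of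
  width \<open>O(sqrt (\<tau>\<^sub>V(c) / \<lambda>\<^sub>V(c)))\<close> around \<open>\<tau>\<^sub>V(c)\<close>, which is a cutoff. Conversely, a cutoff
  at \<open>t\<^sub>n\<close> forces \<open>t\<^sub>n \<lambda>\<^sub>V(c) \<rightarrow> \<infinity>\<close>, since otherwise the mass of \<open>dV\<^sub>n\<close> just above
  \<open>\<lambda>\<^sub>V(c)\<close> survives at time \<open>2 t\<^sub>n\<close>; the mixing times \<open>T\<^sub>V(\<epsilon>)\<close> and \<open>\<tau>\<^sub>V(c)\<close> are then
  comparable to \<open>t\<^sub>n\<close>.
\<close>

section \<open>The Laplace transform of a single function of class V\<close>

lemma exp_le_step_sum:
  fixes x :: "nat \<Rightarrow> real"
  assumes "0 \<le> t" "mono x" "0 < y" "y \<le> x N"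
  shows "exp (- t * y)
    \<le> indicator {0<..x 0} y + (\<Sum>k<N. exp (- t * x k) * indicator {x k<..x (Suc k)} y)"
  using assms(4)
proof (induction N)
  case 0
  then show ?case using assms by (simp add: mult_nonneg_nonneg)
next
  case (Suc N)
  have nonneg: "0 \<le> exp (- t * x N) * (indicator {x N<..x (Suc N)} y :: real)" by simp
  show ?case
  proof (cases "y \<le> x N")
    case True
    then show ?thesis using Suc.IH nonneg by simp
  next
    case False
    then have "exp (- t * y) \<le> exp (- t * x N) * indicator {x N<..x (Suc N)} y"
      using Suc.prems assms(1) by (simp add: mult_left_mono)
    moreover have
      "0 \<le> indicator {0<..x 0} y + (\<Sum>k<N. exp (- t * x k) * indicator {x k<..x (Suc k)} (y::real))"
      by (intro add_nonneg_nonneg sum_nonneg) auto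
    ultimately show ?thesis by simp
  qed
qed

locale classV_function =
  fixes V :: "real \<Rightarrow> real"
  assumes V_in_classV: "V \<in> classV"
begin

definition V_top :: real where "V_top = Lim at_top V"

abbreviation dV :: "real measure" where "dV \<equiv> interval_measure (extV V)"
abbreviation L :: "real \<Rightarrow> real" where "L \<equiv> LV V"

lemma V_mono: "0 < x \<Longrightarrow> x \<le> y \<Longrightarrow> V x \<le> V y"
  using V_in_classV unfolding classV_def by (auto intro: mono_onD)

lemma V_tendsto_0: "(V \<longlongrightarrow> 0) (at_right 0)"
  using V_in_classV unfolding classV_def by auto

lemma V_tendsto_top: "(V \<longlongrightarrow> V_top) at_top"
proof -
  obtain L0 where "(V \<longlongrightarrow> L0) at_top" using V_in_classV unfolding classV_def by auto
  then show ?thesis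
    unfolding V_top_def using tendsto_Lim by (metis convergent_def trivial_limit_at_top_linorder)
qed

lemma V_nonneg: "0 < x \<Longrightarrow> 0 \<le> V x"
  by (rule tendsto_upperbound[OF V_tendsto_0])
     (auto simp: eventually_at_right_field intro!: exI[of _ x] V_mono)

lemma V_le_top: "0 < x \<Longrightarrow> V x \<le> V_top"
  by (rule tendsto_lowerbound[OF V_tendsto_top])
     (auto simp: eventually_at_top_linorder intro!: exI[of _ x] V_mono)

lemma V_top_nonneg: "0 \<le> V_top"
  using V_nonneg[of 1] V_le_top[of 1] by simp

lemma extV_mono: "x \<le> y \<Longrightarrow> extV V x \<le> extV V y"
  unfolding extV_def using V_nonneg V_mono by auto

lemma continuous_at_right_extV: "continuous (at_right a) (extV V)"
proof -
  consider "a < 0" | "a = 0" | "0 < a" by linarith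
  then have "(extV V \<longlongrightarrow> extV V a) (at_right a)"
  proof cases
    case 1
    then have "\<forall>\<^sub>F x in at_right a. extV V x = 0"
      by (auto simp: eventually_at_right_field extV_def intro!: exI[of _ 0])
    with 1 show ?thesis by (simp add: extV_def tendsto_eventually)
  next
    case 2
    have "\<forall>\<^sub>F x in at_right 0. V x = extV V x"
      by (auto simp: eventually_at_right_field extV_def intro!: exI[of _ 1])
    with 2 show ?thesis by (simp add: extV_def Lim_transform_eventually[OF V_tendsto_0])
  next
    case 3
    then have "(V \<longlongrightarrow> V a) (at_right a)"
      using V_in_classV unfolding classV_def continuous_within by auto
    moreover have "\<forall>\<^sub>F x in at_right a. V x = extV V x"
      using 3 by (auto simp: eventually_at_right_field extV_def intro!: exI[of _ "a + 1"])
    ultimately show ?thesis using 3 by (simp add: extV_def Lim_transform_eventually)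
  qed
  then show ?thesis by (simp add: continuous_within)
qed

lemma emeasure_dV_Ioc: "a \<le> b \<Longrightarrow> emeasure dV {a<..b} = ennreal (extV V b - extV V a)"
  using emeasure_interval_measure_Ioc[OF _ extV_mono continuous_at_right_extV] .

lemma emeasure_dV_le_top: "emeasure dV UNIV \<le> ennreal V_top"
proof -
  let ?A = "\<lambda>n::nat. {- real n<..real n}"
  have "x \<in> ?A (nat \<lceil>\<bar>x\<bar>\<rceil> + 1)" for x by simp linarith
  then have "(\<Union>n. ?A n) = UNIV" by blast
  then have "emeasure dV UNIV = emeasure dV (\<Union>n. ?A n)" by simp
  also have "\<dots> = (SUP n. emeasure dV (?A n))"
    by (intro SUP_emeasure_incseq[symmetric]) (auto simp: incseq_def)
  also have "\<dots> \<le> ennreal V_top"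
    using V_le_top V_top_nonneg by (intro SUP_least) (simp add: emeasure_dV_Ioc extV_def ennreal_leI)
  finally show ?thesis .
qed

sublocale dV: finite_measure dV
  using emeasure_dV_le_top by (intro finite_measureI) (auto simp: top_unique)

lemma measure_dV_Ioc: "0 < a \<Longrightarrow> a \<le> b \<Longrightarrow> measure dV {a<..b} = V b - V a"
  using emeasure_dV_Ioc[of a b] extV_mono[of a b] by (simp add: measure_def extV_def)

lemma measure_dV_Ioc_0: "0 < b \<Longrightarrow> measure dV {0<..b} = V b"
  using emeasure_dV_Ioc[of 0 b] by (simp add: measure_def extV_def V_nonneg)

lemma measure_dV_le_top: "measure dV A \<le> V_top"
  using emeasure_dV_le_top emeasure_mono[of A UNIV dV] V_top_nonneg
  by (simp add: measure_def enn2real_leI)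

lemma integrable_dV_indicator [simp]:
  "A \<in> sets borel \<Longrightarrow> integrable dV (indicator A :: real \<Rightarrow> real)"
  by (simp add: less_top[symmetric])

lemma integrable_dV_bounded:
  "f \<in> borel_measurable borel \<Longrightarrow> (\<And>x. \<bar>f x\<bar> \<le> B) \<Longrightarrow> integrable dV (f :: real \<Rightarrow> real)"
  by (intro dV.integrable_const_bound[where B=B]) auto

lemma LV_eq: "L t = (\<integral>l. indicator {0<..} l * exp (- t * l) \<partial>dV)"
  unfolding LV_def set_lebesgue_integral_def by simp

lemma integrable_LV: "0 \<le> t \<Longrightarrow> integrable dV (\<lambda>l. indicator {0<..} l * exp (- t * l))"
  by (rule integrable_dV_bounded[where B=1]) (auto simp: indicator_def mult_nonneg_nonneg)

lemma LV_nonneg: "0 \<le> L t"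
  unfolding LV_eq by (rule integral_nonneg_AE) (auto simp: indicator_def)

lemma LV_antimono: "0 \<le> t \<Longrightarrow> t \<le> t' \<Longrightarrow> L t' \<le> L t"
  unfolding LV_eq
  by (intro integral_mono integrable_LV) (auto simp: indicator_def mult_right_mono)

lemma exp_mult_V_le_LV:
  assumes "0 \<le> t" "0 < l"
  shows "exp (- t * l) * V l \<le> L t"
proof -
  have "exp (- t * l) * V l = (\<integral>x. exp (- t * l) * indicator {0<..l} x \<partial>dV)"
    using measure_dV_Ioc_0[OF assms(2)] by simp
  also have "\<dots> \<le> L t"
    unfolding LV_eq using assms
    by (intro integral_mono integrable_LV integrable_dV_bounded[where B="exp (- t * l)"])
       (auto simp: indicator_def mult_left_mono)
  finally show ?thesis .
qed

lemma LV_shift_le: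
  assumes "0 \<le> t" "0 \<le> s" "0 < a" "a \<le> b"
  shows "L (t + s) \<le> V a + exp (- (t + s) * a) * V b + exp (- s * b) * L t"
proof -
  let ?g = "\<lambda>x. indicator {0<..a} x + exp (- (t + s) * a) * indicator {0<..b} x
               + exp (- s * b) * (indicator {0<..} x * exp (- t * x))"
  have "indicator {0<..} x * exp (- (t + s) * x) \<le> ?g x" for x :: real
  proof -
    let ?f = "indicator {0<..} x * exp (- (t + s) * x)"
    have "?f \<le> indicator {0<..a} x \<or> ?f \<le> exp (- (t + s) * a) * indicator {0<..b} x
          \<or> ?f \<le> exp (- s * b) * (indicator {0<..} x * exp (- t * x))"
    proof -
      consider "x \<le> 0" | "0 < x" "x \<le> a" | "a < x" "x \<le> b" | "b < x" by linarith
      then show ?thesis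
      proof cases
        case 2
        then have "exp (- (t + s) * x) \<le> 1" using assms by (simp add: mult_nonpos_nonneg)
        with 2 show ?thesis by simp
      next
        case 3
        then have "exp (- (t + s) * x) \<le> exp (- (t + s) * a)"
          using assms by (intro exp_mono mult_left_mono_neg) auto
        with 3 assms show ?thesis by simp
      next
        case 4
        have "exp (- (t + s) * x) = exp (- s * x) * exp (- t * x)"
          by (simp add: algebra_simps flip: exp_add)
        also have "\<dots> \<le> exp (- s * b) * exp (- t * x)"
          using 4 assms by (intro mult_right_mono exp_mono mult_left_mono_neg) auto
        finally show ?thesis using 4 assms by simp
      qed simp
    qed
    moreover have "0 \<le> (indicator {0<..a} x :: real)" "0 \<le> exp (- (t + s) * a) * indicator {0<..b} x"
      "0 \<le> exp (- s * b) * (indicator {0<..} x * exp (- t * x))"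
      by simp_all
    ultimately show ?thesis by linarith
  qed
  then have "L (t + s) \<le> integral\<^sup>L dV ?g"
    unfolding LV_eq using assms
    by (intro integral_mono integrable_LV Bochner_Integration.integrable_add
          integrable_mult_right) auto
  also have "\<dots> = V a + exp (- (t + s) * a) * V b + exp (- s * b) * L t"
    using assms integrable_LV[OF assms(1)]
    by (simp add: LV_eq measure_dV_Ioc_0)
  finally show ?thesis .
qed

lemma LV_le_upper_sum:
  fixes x :: "nat \<Rightarrow> real"
  assumes "0 \<le> t" "mono x" "0 < x 0"
  shows "L t \<le> V (x 0) + (\<Sum>k<N. exp (- t * x k) * (V (x (Suc k)) - V (x k)))
                 + exp (- t * x N) * V_top"
proof -
  let ?g = "\<lambda>y. indicator {0<..x 0} y + (\<Sum>k<N. exp (- t * x k) * indicator {x k<..x (Suc k)} y)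
              + exp (- t * x N) * indicator {0<..} y"
  have x_pos: "0 < x k" for k using assms(2,3) by (metis le0 less_le_trans monoD)
  have "indicator {0<..} y * exp (- t * y) \<le> ?g y" for y
  proof (cases "0 < y")
    case True
    show ?thesis
    proof (cases "y \<le> x N")
      case True
      with \<open>0 < y\<close> show ?thesis
        using exp_le_step_sum[OF assms(1,2) \<open>0 < y\<close> True] by (simp add: add_increasing2)
    next
      case False
      then have "exp (- t * y) \<le> exp (- t * x N)" using assms(1) by (simp add: mult_left_mono)
      moreover have
        "0 \<le> indicator {0<..x 0} y + (\<Sum>k<N. exp (- t * x k) * indicator {x k<..x (Suc k)} y)"
        by (intro add_nonneg_nonneg sum_nonneg) auto
      ultimately show ?thesis using \<open>0 < y\<close> by (simp del: exp_le_cancel_iff)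
    qed
  qed (auto intro!: sum_nonneg)
  then have "L t \<le> integral\<^sup>L dV ?g"
    unfolding LV_eq using assms
    by (intro integral_mono integrable_LV Bochner_Integration.integrable_add
          Bochner_Integration.integrable_sum integrable_mult_right integrable_dV_indicator) auto
  also have "\<dots> = V (x 0) + (\<Sum>k<N. exp (- t * x k) * (V (x (Suc k)) - V (x k)))
                  + exp (- t * x N) * measure dV {0<..}"
  proof -
    have "(\<integral>y. (\<Sum>k<N. exp (- t * x k) * indicator {x k<..x (Suc k)} y) \<partial>dV)
        = (\<Sum>k<N. exp (- t * x k) * (V (x (Suc k)) - V (x k)))"
      using x_pos assms(2)
      by (subst Bochner_Integration.integral_sum) (auto simp: measure_dV_Ioc monoD)
    then show ?thesis
      using x_pos by (simp add: measure_dV_Ioc_0 del: sum_mult_indicator)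
  qed
  also have "\<dots> \<le> V (x 0) + (\<Sum>k<N. exp (- t * x k) * (V (x (Suc k)) - V (x k)))
                  + exp (- t * x N) * V_top"
    using measure_dV_le_top by simp
  finally show ?thesis .
qed

lemma LV_le_of_exp_growth:
  assumes "0 \<le> r" "r < t" "0 < a" "a \<le> b" "0 < h"
    and growth: "\<And>y. b + h \<le> y \<Longrightarrow> V y \<le> exp (r * y)"
  shows "L t \<le> V a + exp (- t * a) * V b
                 + exp (r * (b + h)) * exp (- t * b) / (1 - exp (- (t - r) * h))"
proof -
  \<comment> \<open>an upper sum over the partition \<open>a, b, b + h, b + 2h, \<dots>\<close>;
      the growth bound makes its tail geometric\<close>
  define q where "q = exp (- (t - r) * h)"
  define C where "C = exp (r * (b + h)) * exp (- t * b)"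
  define x where "x k = (if k = 0 then a else b + real (k - 1) * h)" for k
  have q: "0 < q" "q < 1" unfolding q_def using assms by (simp_all add: mult_neg_pos)
  have x_Suc: "x (Suc k) = b + real k * h" for k by (simp add: x_def)
  have "mono x"
    unfolding mono_iff_le_Suc using assms by (auto simp: x_def)
  have geometric:
    "(\<Sum>k<N. exp (- t * x (Suc k)) * (V (x (Suc (Suc k))) - V (x (Suc k)))) \<le> C / (1 - q)" for N
  proof -
    have "exp (- t * x (Suc k)) * (V (x (Suc (Suc k))) - V (x (Suc k))) \<le> C * q ^ k" for k
    proof -
      have "V (x (Suc (Suc k))) - V (x (Suc k)) \<le> exp (r * (b + real (Suc k) * h))"
        using growth[of "b + real (Suc k) * h"] V_nonneg[of "x (Suc k)"] assms
        by (simp add: x_Suc algebra_simps add_pos_nonneg)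
      then have "exp (- t * x (Suc k)) * (V (x (Suc (Suc k))) - V (x (Suc k)))
          \<le> exp (- t * (b + real k * h)) * exp (r * (b + real (Suc k) * h))"
        by (simp add: x_Suc)
      also have "\<dots> = C * q ^ k"
        unfolding C_def q_def by (simp add: algebra_simps flip: exp_add exp_of_nat_mult)
      finally show ?thesis .
    qed
    then have "(\<Sum>k<N. exp (- t * x (Suc k)) * (V (x (Suc (Suc k))) - V (x (Suc k))))
        \<le> (\<Sum>k<N. C * q ^ k)"
      by (rule sum_mono)
    also have "\<dots> = C * (1 - q ^ N) / (1 - q)"
      using q by (simp add: sum_distrib_left[symmetric] sum_gp_strict)
    also have "\<dots> \<le> C / (1 - q)"
      using q by (simp add: C_def divide_right_mono mult_left_le)
    finally show ?thesis .
  qed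
  have bound: "L t \<le> V a + exp (- t * a) * V b + C / (1 - q) + exp (- t * (b + real N * h)) * V_top" for N
  proof -
    have "L t \<le> V (x 0) + (\<Sum>k<Suc N. exp (- t * x k) * (V (x (Suc k)) - V (x k)))
        + exp (- t * x (Suc N)) * V_top"
      using assms by (intro LV_le_upper_sum \<open>mono x\<close>) (auto simp: x_def)
    also have "\<dots> = V a + exp (- t * a) * (V b - V a)
        + (\<Sum>k<N. exp (- t * x (Suc k)) * (V (x (Suc (Suc k))) - V (x (Suc k))))
        + exp (- t * (b + real N * h)) * V_top"
      by (simp only: sum.lessThan_Suc_shift x_Suc) (simp add: x_def)
    also have "\<dots> \<le> V a + exp (- t * a) * V b + C / (1 - q) + exp (- t * (b + real N * h)) * V_top"
      using geometric[of N] mult_nonneg_nonneg[OF exp_ge_zero V_nonneg[OF assms(3)], of "- t * a"]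
      by (simp add: right_diff_distrib)
    finally show ?thesis .
  qed
  have "(\<lambda>N. exp (- t * (b + real N * h)) * V_top) \<longlonglongrightarrow> 0"
    using assms by (intro tendsto_mult_left_zero) real_asymp
  then have "L t \<le> V a + exp (- t * a) * V b + C / (1 - q) + 0"
    using bound by (intro LIMSEQ_le_const[OF tendsto_add[OF tendsto_const]]) auto
  then show ?thesis unfolding C_def q_def by simp
qed

lemma eventually_LV_le:
  assumes "0 < e"
  shows "\<forall>\<^sub>F s in at_top. L s \<le> e"
proof -
  have "\<forall>\<^sub>F y in at_right 0. V y < e / 2"
    using order_tendstoD(2)[OF V_tendsto_0, of "e / 2"] assms by simp
  then obtain b where b: "0 < b" "\<And>y. 0 < y \<Longrightarrow> y < b \<Longrightarrow> V y < e / 2"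
    unfolding eventually_at_right_field by auto
  define a where "a = b / 2"
  have a: "0 < a" "V a < e / 2" using b by (auto simp: a_def)
  have "((\<lambda>s. exp (- (s * a)) * (V a + L 0)) \<longlongrightarrow> 0) at_top"
    using a(1) by (intro tendsto_mult_left_zero) real_asymp
  then have "\<forall>\<^sub>F s in at_top. exp (- (s * a)) * (V a + L 0) < e / 2"
    using assms by (intro order_tendstoD(2)) auto
  moreover have "\<forall>\<^sub>F s in at_top. (0::real) \<le> s" by simp
  ultimately show ?thesis
  proof eventually_elim
    case (elim s)
    have "L (0 + s) \<le> V a + exp (- (0 + s) * a) * V a + exp (- s * a) * L 0"
      using a elim by (intro LV_shift_le) auto
    with a elim show ?case by (simp add: algebra_simps)
  qed
qed

lemma LV_inverse_Suc_tendsto: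
  assumes "0 \<le> t"
  shows "(\<lambda>k. L (t + inverse (real (Suc k)))) \<longlonglongrightarrow> L t"
  unfolding LV_eq
proof (rule integral_dominated_convergence[where w="indicator {0<..}"])
  show "AE x in dV. (\<lambda>k. indicator {0<..} x * exp (- (t + inverse (real (Suc k))) * x))
          \<longlonglongrightarrow> indicator {0<..} x * exp (- t * x)"
    using LIMSEQ_inverse_real_of_nat
    by (intro AE_I2 tendsto_intros) (auto intro: tendsto_eq_intros)
  show "AE x in dV. norm (indicator {0<..} x * exp (- (t + inverse (real (Suc k))) * x))
          \<le> (indicator {0<..} x :: real)" for k
  proof (intro AE_I2)
    fix x :: real
    have "0 < inverse (real (Suc k))" by simp
    then have "- (t + inverse (real (Suc k))) * x \<le> 0" if "0 < x"
      using assms that by (intro mult_nonpos_nonneg) linarith+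
    then have "exp (- (t + inverse (real (Suc k))) * x) \<le> 1" if "0 < x"
      using that by (simp only: exp_le_one_iff)
    then show "norm (indicator {0<..} x * exp (- (t + inverse (real (Suc k))) * x))
        \<le> (indicator {0<..} x :: real)"
      by (auto simp: indicator_def)
  qed
qed auto

lemma TV_is_least:
  assumes "0 < e"
  shows "0 \<le> TV V e \<and> L (TV V e) \<le> e \<and> (\<forall>t\<ge>0. L t \<le> e \<longrightarrow> TV V e \<le> t)"
proof -
  define S where "S = {t. 0 \<le> t \<and> L t \<le> e}"
  obtain N where "\<And>s. N \<le> s \<Longrightarrow> L s \<le> e"
    using eventually_LV_le[OF assms] unfolding eventually_at_top_linorder by blast
  then have "max N 0 \<in> S" unfolding S_def by simp
  then have "S \<noteq> {}" by blast
  have below: "Inf S \<le> t" if "t \<in> S" for t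
    using that by (intro cInf_lower) (auto simp: S_def bdd_below_def)
  have nonneg: "0 \<le> Inf S"
    using \<open>S \<noteq> {}\<close> by (intro cInf_greatest) (auto simp: S_def)
  have "L (Inf S + inverse (real (Suc k))) \<le> e" for k
  proof -
    obtain s where "s \<in> S" "s < Inf S + inverse (real (Suc k))"
      using cInf_lessD[OF \<open>S \<noteq> {}\<close>, of "Inf S + inverse (real (Suc k))"] by auto
    then show ?thesis
      using LV_antimono[of s "Inf S + inverse (real (Suc k))"] unfolding S_def by auto
  qed
  then have "L (Inf S) \<le> e"
    by (intro LIMSEQ_le_const2[OF LV_inverse_Suc_tendsto[OF nonneg]]) auto
  then have "TV V e = Inf S"
    unfolding TV_def using nonneg below by (intro Least_equality) (auto simp: S_def)
  then show ?thesis using nonneg below \<open>L (Inf S) \<le> e\<close> by (auto simp: S_def)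
qed

lemma TV_nonneg: "0 < e \<Longrightarrow> 0 \<le> TV V e"
  using TV_is_least by blast

lemma LV_TV_le: "0 < e \<Longrightarrow> L (TV V e) \<le> e"
  using TV_is_least by blast

lemma TV_le: "0 < e \<Longrightarrow> 0 \<le> t \<Longrightarrow> L t \<le> e \<Longrightarrow> TV V e \<le> t"
  using TV_is_least by blast

lemma less_TV_imp_LV_gt: "0 < e \<Longrightarrow> 0 \<le> t \<Longrightarrow> t < TV V e \<Longrightarrow> e < L t"
  using TV_le by force

section \<open>The scales \<open>\<lambda>\<^sub>V\<close> and \<open>\<tau>\<^sub>V\<close>\<close>

abbreviation lam :: "real \<Rightarrow> real" where "lam \<equiv> lamV V"
abbreviation tau :: "real \<Rightarrow> real" where "tau \<equiv> tauV V"

lemma LV_0_le_top: "L 0 \<le> V_top"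
  using measure_dV_le_top[of "{0<..}"] by (simp add: LV_eq)

lemma ex_V_gt: assumes "c < V_top" shows "\<exists>l>0. c < V l"
proof -
  obtain N where "\<And>l. N \<le> l \<Longrightarrow> c < V l"
    using order_tendstoD(1)[OF V_tendsto_top assms] unfolding eventually_at_top_linorder by blast
  then show ?thesis by (intro exI[of _ "max N 1"]) auto
qed

lemma lamV_le: "0 < l \<Longrightarrow> c < V l \<Longrightarrow> lam c \<le> l"
  unfolding lamV_def by (rule cInf_lower) (auto intro: bdd_belowI[of _ 0])

lemma V_le_below_lamV: "0 < l \<Longrightarrow> l < lam c \<Longrightarrow> V l \<le> c"
  using lamV_le[of l c] by force

lemma V_gt_above_lamV:
  assumes "c < V_top" "lam c < l"
  shows "c < V l"
proof -
  obtain l' where "0 < l'" "c < V l'" "l' < l"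
    using cInf_lessD[of "{l. 0 < l \<and> c < V l}" l] ex_V_gt[OF assms(1)] assms(2)
    unfolding lamV_def by auto
  then show ?thesis using V_mono[of l' l] by simp
qed

lemma lamV_pos:
  assumes "0 < c" "c < V_top"
  shows "0 < lam c"
proof -
  obtain b where b: "0 < b" "\<And>y. 0 < y \<Longrightarrow> y < b \<Longrightarrow> V y < c"
    using order_tendstoD(2)[OF V_tendsto_0 assms(1)] unfolding eventually_at_right_field by auto
  have "b \<le> lam c"
    unfolding lamV_def
  proof (rule cInf_greatest)
    show "{l. 0 < l \<and> c < V l} \<noteq> {}" using ex_V_gt[OF assms(2)] by auto
    fix l assume "l \<in> {l. 0 < l \<and> c < V l}"
    then show "b \<le> l" using b(2)[of l] by force
  qed
  with b show ?thesis by simp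
qed

lemma lamV_mono: "c < V_top \<Longrightarrow> c' \<le> c \<Longrightarrow> lam c' \<le> lam c"
  unfolding lamV_def using ex_V_gt[of c]
  by (intro cInf_mono) (auto intro: bdd_belowI[of _ 0])

lemma bdd_above_tauV:
  assumes "0 < c" "c < V_top"
  shows "bdd_above ((\<lambda>l. ln (1 + V l) / l) ` {lam c..})"
proof (rule bdd_aboveI2)
  fix l assume "l \<in> {lam c..}"
  then have l: "lam c \<le> l" "0 < l" using lamV_pos[OF assms] by auto
  have "0 \<le> ln (1 + V l)" "ln (1 + V l) \<le> ln (1 + V_top)"
    using V_le_top[OF l(2)] V_nonneg[OF l(2)] by simp_all
  then show "ln (1 + V l) / l \<le> ln (1 + V_top) / lam c"
    using l lamV_pos[OF assms] by (intro frac_le) auto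
qed

lemma tauV_ge: "0 < c \<Longrightarrow> c < V_top \<Longrightarrow> lam c \<le> l \<Longrightarrow> ln (1 + V l) / l \<le> tau c"
  unfolding tauV_def by (intro cSUP_upper bdd_above_tauV) auto

lemma V_le_exp_tauV:
  assumes "0 < c" "c < V_top" "lam c \<le> l"
  shows "V l \<le> exp (tau c * l)"
proof -
  have l: "0 < l" using lamV_pos[OF assms(1,2)] assms(3) by simp
  have "ln (1 + V l) \<le> tau c * l" using tauV_ge[OF assms] l by (simp add: pos_divide_le_eq)
  then have "exp (ln (1 + V l)) \<le> exp (tau c * l)" by simp
  then show ?thesis using V_nonneg[OF l] by simp
qed

lemma tauV_pos:
  assumes "0 < c" "c < V_top"
  shows "0 < tau c"
proof -
  have l: "0 < lam c" using lamV_pos[OF assms] .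
  then have "c < V (2 * lam c)" using V_gt_above_lamV[OF assms(2)] by simp
  then have "0 < ln (1 + V (2 * lam c)) / (2 * lam c)" using assms l by simp
  also have "\<dots> \<le> tau c" using tauV_ge[OF assms] l by simp
  finally show ?thesis .
qed

lemma ex_above_tauV:
  assumes "0 < c" "c < V_top" "0 < e"
  shows "\<exists>l\<ge>lam c. tau c - e < ln (1 + V l) / l"
  using less_cSUP_iff[OF _ bdd_above_tauV[OF assms(1,2)], of "tau c - e"] assms(3)
  unfolding tauV_def by auto

lemma tauV_le_max:
  assumes "0 < c'" "c' \<le> c" "c < V_top"
  shows "tau c' \<le> max (tau c) (ln (1 + c) / lam c')"
  unfolding tauV_def[of V c']
proof (rule cSUP_least)
  fix l assume "l \<in> {lam c'..}"
  then have l: "lam c' \<le> l" "0 < l" using lamV_pos[OF assms(1)] assms by auto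
  show "ln (1 + V l) / l \<le> max (tau c) (ln (1 + c) / lam c')"
  proof (cases "lam c \<le> l")
    case True
    then show ?thesis using tauV_ge[OF _ assms(3) True] assms by simp
  next
    case False
    then have "0 \<le> ln (1 + V l)" "ln (1 + V l) \<le> ln (1 + c)"
      using V_le_below_lamV[of l c] V_nonneg[OF l(2)] l by auto
    then have "ln (1 + V l) / l \<le> ln (1 + c) / lam c'"
      using l lamV_pos[OF assms(1)] assms by (intro frac_le) auto
    then show ?thesis by simp
  qed
qed simp

lemma LV_tauV_plus_le:
  assumes "0 < c'" "c' \<le> c" "c < V_top" "2 \<le> tau c * lam c" "0 < u"
  shows "L (tau c + u) \<le> c' + c * exp (- (tau c * lam c' / 2))
          + exp (1 + u / tau c) * exp (- (u * lam c)) / (1 - exp (- (u / tau c)))"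
proof -
  have "0 < c" using assms by simp
  have tau: "0 < tau c" using tauV_pos[OF \<open>0 < c\<close> assms(3)] .
  have lam: "0 < lam c" using lamV_pos[OF \<open>0 < c\<close> assms(3)] .
  have lam': "0 < lam c'" "lam c' \<le> lam c"
    using lamV_pos[OF assms(1)] lamV_mono[OF assms(3,2)] assms by auto
  define a where "a = lam c' / 2"
  define b where "b = lam c - 1 / tau c"
  have "1 / tau c \<le> lam c / 2" using assms(4) tau by (simp add: field_simps)
  then have ab: "0 < a" "a \<le> b" "b < lam c" using lam' tau by (auto simp: a_def b_def)
  have "L (tau c + u) \<le> V a + exp (- (tau c + u) * a) * V b
      + exp (tau c * (b + 1 / tau c)) * exp (- (tau c + u) * b)
        / (1 - exp (- (tau c + u - tau c) * (1 / tau c)))"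
    using V_le_exp_tauV[OF \<open>0 < c\<close> assms(3)] tau assms(5) ab
    by (intro LV_le_of_exp_growth) (auto simp: b_def intro: add_increasing)
  also have "\<dots> = V a + exp (- (tau c + u) * a) * V b
      + exp (1 + u / tau c) * exp (- (u * lam c)) / (1 - exp (- (u / tau c)))"
  proof -
    have "tau c * (b + 1 / tau c) + - (tau c + u) * b = 1 + u / tau c + - (u * lam c)"
      unfolding b_def using tau by (simp add: field_simps)
    then show ?thesis by (simp flip: exp_add)
  qed
  also have "\<dots> \<le> c' + c * exp (- (tau c * lam c' / 2))
      + exp (1 + u / tau c) * exp (- (u * lam c)) / (1 - exp (- (u / tau c)))"
  proof -
    have "V a \<le> c'" using V_le_below_lamV[of a c'] ab lam' by (simp add: a_def)
    moreover have "exp (- (tau c + u) * a) * V b \<le> c * exp (- (tau c * lam c' / 2))"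
    proof -
      have "exp (- (tau c + u) * a) \<le> exp (- (tau c * lam c' / 2))"
        using lam' assms(5) by (simp add: a_def field_simps)
      moreover have "V b \<le> c" "0 \<le> V b" using V_le_below_lamV[of b c] V_nonneg[of b] ab by auto
      ultimately have "exp (- (tau c + u) * a) * V b \<le> exp (- (tau c * lam c' / 2)) * c"
        by (intro mult_mono) auto
      then show ?thesis by (simp add: mult.commute)
    qed
    ultimately show ?thesis by simp
  qed
  finally show ?thesis .
qed

lemma LV_le_beyond_4_tauV:
  assumes "0 < c" "c < V_top" "4 * tau c \<le> t" "4 \<le> t * lam c"
  shows "L t \<le> 2 * c + 2 * exp (- (t * lam c / 4))"
proof -
  have tau: "0 < tau c" using tauV_pos[OF assms(1,2)] .
  have lam: "0 < lam c" using lamV_pos[OF assms(1,2)] .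
  have tau_lam: "tau c * lam c \<le> t * lam c / 4" using assms(3) lam by (simp add: field_simps)
  have "L t \<le> V (lam c / 2) + exp (- t * (lam c / 2)) * V (lam c / 2)
      + exp (tau c * (lam c / 2 + lam c / 2)) * exp (- t * (lam c / 2))
        / (1 - exp (- (t - tau c) * (lam c / 2)))"
    using V_le_exp_tauV[OF assms(1,2)] tau lam assms(3)
    by (intro LV_le_of_exp_growth) (auto intro: add_increasing)
  also have "\<dots> \<le> c + 1 * c + exp (- (t * lam c / 4)) / (1 / 2)"
  proof -
    have V: "V (lam c / 2) \<le> c" "0 \<le> V (lam c / 2)"
      using V_le_below_lamV[of "lam c / 2" c] V_nonneg[of "lam c / 2"] lam by auto
    have "exp (- t * (lam c / 2)) \<le> 1" using tau lam assms(3) by simp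
    then have "exp (- t * (lam c / 2)) * V (lam c / 2) \<le> 1 * c" using V by (intro mult_mono) auto
    moreover have "exp (tau c * (lam c / 2 + lam c / 2)) * exp (- t * (lam c / 2))
        / (1 - exp (- (t - tau c) * (lam c / 2))) \<le> exp (- (t * lam c / 4)) / (1 / 2)"
    proof (rule frac_le)
      show "exp (tau c * (lam c / 2 + lam c / 2)) * exp (- t * (lam c / 2)) \<le> exp (- (t * lam c / 4))"
        using tau_lam by (simp flip: exp_add)
      have "exp (- (t - tau c) * (lam c / 2)) \<le> exp (- (3 / 2))"
        using tau_lam assms(4) by (simp add: field_simps)
      also have "exp (- (3 / 2) :: real) \<le> 1 / 2"
        using exp_ge_add_one_self[of "3 / 2 :: real"] by (simp add: exp_minus field_simps)
      finally show "1 / 2 \<le> 1 - exp (- (t - tau c) * (lam c / 2))" by simp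
    qed auto
    ultimately show ?thesis using V by linarith
  qed
  finally show ?thesis by simp
qed

lemma LV_before_tauV_ge:
  assumes "0 < c" "c < V_top" "0 < e" "0 \<le> t" "t \<le> tau c - e"
  shows "exp ((tau c - e - t) * lam c) - 1 \<le> L t"
proof -
  obtain l where l: "lam c \<le> l" "tau c - e < ln (1 + V l) / l"
    using ex_above_tauV[OF assms(1-3)] by auto
  have "0 < l" using lamV_pos[OF assms(1,2)] l(1) by simp
  have "(tau c - e) * l < ln (1 + V l)" using l(2) \<open>0 < l\<close> by (simp add: field_simps)
  then have "exp ((tau c - e) * l) < exp (ln (1 + V l))" by simp
  then have V_l: "exp ((tau c - e) * l) - 1 < V l" using V_nonneg[OF \<open>0 < l\<close>] by simp
  have "exp ((tau c - e - t) * lam c) - 1 \<le> exp ((tau c - e - t) * l) - exp (- t * l)"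
  proof -
    have "exp ((tau c - e - t) * lam c) \<le> exp ((tau c - e - t) * l)"
      using l assms by (simp add: mult_left_mono)
    moreover have "exp (- t * l) \<le> 1" using assms \<open>0 < l\<close> by simp
    ultimately show ?thesis by linarith
  qed
  also have "\<dots> = exp (- t * l) * (exp ((tau c - e) * l) - 1)"
    by (simp add: algebra_simps flip: exp_add)
  also have "\<dots> \<le> exp (- t * l) * V l" using V_l by (intro mult_left_mono) auto
  also have "\<dots> \<le> L t" by (rule exp_mult_V_le_LV[OF assms(4) \<open>0 < l\<close>])
  finally show ?thesis .
qed

lemma LV_shift_le_levels:
  assumes "0 < c'" "c' \<le> c" "c < V_top" "0 \<le> t" "0 \<le> s"
  shows "L (t + s) \<le> c' + c * exp (- (t * lam c' / 2)) + exp (- (s * lam c / 2)) * L t"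
proof -
  have lam': "0 < lam c'" "lam c' \<le> lam c"
    using lamV_pos[OF assms(1)] lamV_mono[OF assms(3,2)] assms by auto
  have "L (t + s) \<le> V (lam c' / 2) + exp (- (t + s) * (lam c' / 2)) * V (lam c / 2)
      + exp (- s * (lam c / 2)) * L t"
    using assms lam' by (intro LV_shift_le) auto
  also have "\<dots> \<le> c' + c * exp (- (t * lam c' / 2)) + exp (- (s * lam c / 2)) * L t"
  proof -
    have "V (lam c' / 2) \<le> c'" using V_le_below_lamV[of "lam c' / 2" c'] lam' by simp
    moreover have "exp (- (t + s) * (lam c' / 2)) * V (lam c / 2) \<le> c * exp (- (t * lam c' / 2))"
    proof -
      have "exp (- (t + s) * (lam c' / 2)) \<le> exp (- (t * lam c' / 2))"
        using lam' assms by (simp add: field_simps)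
      moreover have "V (lam c / 2) \<le> c" "0 \<le> V (lam c / 2)"
        using V_le_below_lamV[of "lam c / 2" c] V_nonneg[of "lam c / 2"] lam' by auto
      ultimately have "exp (- (t + s) * (lam c' / 2)) * V (lam c / 2) \<le> exp (- (t * lam c' / 2)) * c"
        by (intro mult_mono) auto
      then show ?thesis by (simp add: mult.commute)
    qed
    ultimately show ?thesis by simp
  qed
  finally show ?thesis .
qed

end

section \<open>Sequences: cutoff and mixing times\<close>

lemma tendsto_exp_neg_mult:
  fixes f :: "'a \<Rightarrow> real"
  assumes "0 < a" "filterlim f at_top F"
  shows "((\<lambda>x. exp (- (a * f x))) \<longlongrightarrow> 0) F"
proof -
  have "filterlim (\<lambda>x. - (a * f x)) at_bot F"
    using filterlim_tendsto_pos_mult_at_top[OF tendsto_const assms]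
    by (simp add: filterlim_uminus_at_top[symmetric])
  then show ?thesis by (rule filterlim_compose[OF exp_at_bot])
qed

lemma tendsto_zero_if_eventually_le:
  fixes f :: "'a \<Rightarrow> real"
  assumes "\<And>e. 0 < e \<Longrightarrow> \<forall>\<^sub>F x in F. f x \<le> e" "\<And>x. 0 \<le> f x"
  shows "(f \<longlongrightarrow> 0) F"
proof (rule order_tendstoI)
  fix e :: real assume "0 < e"
  with assms(1)[of "e / 2"] show "\<forall>\<^sub>F x in F. f x < e"
    by (auto elim: eventually_mono)
qed (use assms(2) in \<open>auto intro: always_eventually less_le_trans\<close>)

lemma eventually_le_of_tendsto_0:
  fixes f :: "'a \<Rightarrow> real"
  shows "(f \<longlongrightarrow> 0) F \<Longrightarrow> 0 < e \<Longrightarrow> \<forall>\<^sub>F x in F. f x \<le> e"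
  using order_tendstoD(2)[of f 0 F e] by (auto elim: eventually_mono)

lemma eventually_ge_of_filterlim:
  fixes f :: "'a \<Rightarrow> real"
  shows "filterlim f at_top F \<Longrightarrow> \<forall>\<^sub>F x in F. Z \<le> f x"
  unfolding filterlim_at_top by blast

locale classV_sequence =
  fixes V :: "nat \<Rightarrow> real \<Rightarrow> real"
  assumes V_in_classV: "\<And>n. V n \<in> classV"
    and LV_0_at_top: "filterlim (\<lambda>n. LV (V n) 0) at_top sequentially"
begin

lemma classV_function: "classV_function (V n)"
  using V_in_classV by (simp add: classV_function_def)

lemma eventually_less_V_top: "\<forall>\<^sub>F n in sequentially. c < classV_function.V_top (V n)"
  using eventually_ge_of_filterlim[OF LV_0_at_top, of "c + 1"]
proof eventually_elim
  case (elim n)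
  then show ?case using classV_function.LV_0_le_top[OF classV_function, of n] by simp
qed

lemma cutoff_time_iff:
  "cutoff_time (\<lambda>n. LV (V n)) t \<longleftrightarrow> (\<forall>n. 0 < t n)
     \<and> (\<forall>a>1. (\<lambda>n. LV (V n) (a * t n)) \<longlonglongrightarrow> 0)
     \<and> (\<forall>a. 0 < a \<and> a < 1 \<longrightarrow> filterlim (\<lambda>n. LV (V n) (a * t n)) at_top sequentially)"
proof -
  have "limsup (\<lambda>n. ereal (LV (V n) 0)) = \<infinity>"
    using LV_0_at_top by (intro lim_imp_Limsup) (simp_all add: tendsto_PInfty_eq_at_top)
  then show ?thesis unfolding cutoff_time_def by (simp add: tendsto_PInfty_eq_at_top)
qed

lemma LV_beyond_tauV_tendsto_0:
  assumes "0 < c0" "1 < a"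
    and H: "\<forall>c>0. filterlim (\<lambda>n. tauV (V n) c0 * lamV (V n) c) at_top sequentially"
  shows "(\<lambda>n. LV (V n) (a * tauV (V n) c0)) \<longlonglongrightarrow> 0"
proof (rule tendsto_zero_if_eventually_le)
  fix e :: real assume "0 < e"
  define c' where "c' = min (e / 3) c0"
  have c': "0 < c'" "c' \<le> c0" "c' \<le> e / 3" using \<open>0 < e\<close> assms(1) by (auto simp: c'_def)
  have "((\<lambda>n. c0 * exp (- (1 / 2 * (tauV (V n) c0 * lamV (V n) c')))) \<longlongrightarrow> 0) sequentially"
    using H c' by (intro tendsto_mult_right_zero tendsto_exp_neg_mult) simp_all
  then have small_middle:
    "\<forall>\<^sub>F n in sequentially. c0 * exp (- (tauV (V n) c0 * lamV (V n) c' / 2)) \<le> e / 3"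
    using \<open>0 < e\<close> by (auto dest!: eventually_le_of_tendsto_0[where e="e / 3"])
  have "((\<lambda>n. exp a * exp (- ((a - 1) * (tauV (V n) c0 * lamV (V n) c0))) / (1 - exp (- (a - 1))))
      \<longlongrightarrow> 0) sequentially"
    using assms by (intro tendsto_divide_zero tendsto_mult_right_zero tendsto_exp_neg_mult) auto
  then have small_tail: "\<forall>\<^sub>F n in sequentially.
      exp a * exp (- ((a - 1) * (tauV (V n) c0 * lamV (V n) c0))) / (1 - exp (- (a - 1))) \<le> e / 3"
    using \<open>0 < e\<close> by (auto dest!: eventually_le_of_tendsto_0[where e="e / 3"])
  show "\<forall>\<^sub>F n in sequentially. LV (V n) (a * tauV (V n) c0) \<le> e"
    using eventually_less_V_top[of c0] eventually_ge_of_filterlim[OF H[rule_format, OF assms(1)], of 2]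
      small_middle small_tail
  proof eventually_elim
    case (elim n)
    interpret classV_function "V n" by (rule classV_function)
    have tau: "0 < tau c0" using tauV_pos[OF assms(1) elim(1)] .
    have "L (a * tau c0) = L (tau c0 + (a - 1) * tau c0)" by (simp add: algebra_simps)
    also have "\<dots> \<le> c' + c0 * exp (- (tau c0 * lam c' / 2))
        + exp (1 + (a - 1) * tau c0 / tau c0) * exp (- ((a - 1) * tau c0 * lam c0))
          / (1 - exp (- ((a - 1) * tau c0 / tau c0)))"
      using tau assms(2) by (intro LV_tauV_plus_le c' elim) simp
    also have "\<dots> = c' + c0 * exp (- (tau c0 * lam c' / 2))
        + exp a * exp (- ((a - 1) * (tau c0 * lam c0))) / (1 - exp (- (a - 1)))"
      using tau by (simp add: mult.assoc)
    finally show ?case using elim(3,4) c'(3) by linarith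
  qed
qed (rule classV_function.LV_nonneg[OF classV_function])

lemma LV_before_tauV_at_top:
  assumes "0 < c0" "0 < a" "a < 1"
    and H: "filterlim (\<lambda>n. tauV (V n) c0 * lamV (V n) c0) at_top sequentially"
  shows "filterlim (\<lambda>n. LV (V n) (a * tauV (V n) c0)) at_top sequentially"
proof -
  have "filterlim (\<lambda>n. exp ((1 - a) / 2 * (tauV (V n) c0 * lamV (V n) c0))) at_top sequentially"
    using assms
    by (intro filterlim_compose[OF exp_at_top] filterlim_tendsto_pos_mult_at_top[OF tendsto_const]) auto
  then have "filterlim (\<lambda>n. -1 + exp ((1 - a) / 2 * (tauV (V n) c0 * lamV (V n) c0))) at_top sequentially"
    by (rule filterlim_tendsto_add_at_top[OF tendsto_const])
  moreover have "\<forall>\<^sub>F n in sequentially.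
      -1 + exp ((1 - a) / 2 * (tauV (V n) c0 * lamV (V n) c0)) \<le> LV (V n) (a * tauV (V n) c0)"
    using eventually_less_V_top[of c0]
  proof eventually_elim
    case (elim n)
    interpret classV_function "V n" by (rule classV_function)
    have tau: "0 < tau c0" using tauV_pos[OF assms(1) elim] .
    have "exp ((tau c0 - (1 - a) * tau c0 / 2 - a * tau c0) * lam c0) - 1 \<le> L (a * tau c0)"
      using tau assms by (intro LV_before_tauV_ge elim) (auto simp: field_simps)
    moreover have "(tau c0 - (1 - a) * tau c0 / 2 - a * tau c0) * lam c0 = (1 - a) / 2 * (tau c0 * lam c0)"
      by (simp add: field_simps)
    ultimately show ?case by simp
  qed
  ultimately show ?thesis by (rule filterlim_at_top_mono)
qed

lemma cutoff_time_tauV: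
  assumes "0 < c0"
    and H: "\<forall>c>0. filterlim (\<lambda>n. tauV (V n) c0 * lamV (V n) c) at_top sequentially"
  shows "\<exists>t. cutoff_time (\<lambda>n. LV (V n)) t \<and> (\<forall>\<^sub>F n in sequentially. t n = tauV (V n) c0)"
proof -
  \<comment> \<open>\<open>tauV (V n) c0\<close> is meaningful only once \<open>c0 < V_top\<close>;
      before that any positive time will do\<close>
  define t where "t n = (if c0 < classV_function.V_top (V n) then tauV (V n) c0 else 1)" for n
  have t_eq: "\<forall>\<^sub>F n in sequentially. t n = tauV (V n) c0"
    using eventually_less_V_top[of c0] by eventually_elim (simp add: t_def)
  have LV_t: "\<forall>\<^sub>F n in sequentially. LV (V n) (a * tauV (V n) c0) = LV (V n) (a * t n)" for a
    using t_eq by eventually_elim simp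
  have "0 < t n" for n
    using classV_function.tauV_pos[OF classV_function assms(1)] by (simp add: t_def)
  moreover have "(\<lambda>n. LV (V n) (a * t n)) \<longlonglongrightarrow> 0" if "1 < a" for a
    by (rule Lim_transform_eventually[OF LV_beyond_tauV_tendsto_0[OF assms(1) that H] LV_t])
  moreover have "filterlim (\<lambda>n. LV (V n) (a * t n)) at_top sequentially" if "0 < a" "a < 1" for a
    using filterlim_cong[OF refl refl LV_t] LV_before_tauV_at_top[OF assms(1) that H[rule_format, OF assms(1)]]
    by blast
  ultimately show ?thesis using t_eq unfolding cutoff_time_iff by blast
qed

lemma cutoff_time_mult_lamV_at_top:
  assumes "cutoff_time (\<lambda>n. LV (V n)) t" "0 < c"
  shows "filterlim (\<lambda>n. t n * lamV (V n) c) at_top sequentially"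
  unfolding filterlim_at_top
proof
  fix Z :: real
  have t: "\<And>n. 0 < t n" "(\<lambda>n. LV (V n) (2 * t n)) \<longlonglongrightarrow> 0"
    using assms(1) unfolding cutoff_time_iff by auto
  have "0 < c * exp (- (4 * Z))" using assms(2) by simp
  from order_tendstoD(2)[OF t(2) this] eventually_less_V_top[of c]
  show "\<forall>\<^sub>F n in sequentially. Z \<le> t n * lamV (V n) c"
  proof eventually_elim
    case (elim n)
    interpret classV_function "V n" by (rule classV_function)
    have lam: "0 < lam c" using lamV_pos[OF assms(2) elim(2)] .
    have "c * exp (- (4 * (t n * lam c))) = exp (- (2 * t n) * (2 * lam c)) * c" by simp
    also have "\<dots> \<le> exp (- (2 * t n) * (2 * lam c)) * V n (2 * lam c)"
      using V_gt_above_lamV[OF elim(2), of "2 * lam c"] lam by (intro mult_left_mono) auto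
    also have "\<dots> \<le> L (2 * t n)"
      using t(1)[of n] lam by (intro exp_mult_V_le_LV) auto
    finally have "c * exp (- (4 * (t n * lam c))) < c * exp (- (4 * Z))"
      using elim(1) by linarith
    then show ?case using assms(2) by simp
  qed
qed

lemma eventually_cutoff_time_le_TV:
  assumes "cutoff_time (\<lambda>n. LV (V n)) t" "0 < e"
  shows "\<forall>\<^sub>F n in sequentially. t n / 2 \<le> TV (V n) e"
proof -
  have "\<forall>a. 0 < a \<and> a < 1 \<longrightarrow> filterlim (\<lambda>n. LV (V n) (a * t n)) at_top sequentially"
    using assms(1) unfolding cutoff_time_iff by blast
  from this[rule_format, of "1 / 2"]
  have "filterlim (\<lambda>n. LV (V n) (1 / 2 * t n)) at_top sequentially" by simp
  from eventually_ge_of_filterlim[OF this, of "e + 1"]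
  show ?thesis
  proof eventually_elim
    case (elim n)
    interpret classV_function "V n" by (rule classV_function)
    show ?case
      using LV_antimono[of "TV (V n) e" "t n / 2"] TV_nonneg[OF assms(2)] LV_TV_le[OF assms(2)] elim
      by fastforce
  qed
qed

lemma TV_mult_lamV_at_top:
  assumes "cutoff_time (\<lambda>n. LV (V n)) t" "0 < e" "0 < c"
  shows "filterlim (\<lambda>n. TV (V n) e * lamV (V n) c) at_top sequentially"
proof -
  have "filterlim (\<lambda>n. 1 / 2 * (t n * lamV (V n) c)) at_top sequentially"
    by (intro filterlim_tendsto_pos_mult_at_top[OF tendsto_const]
          cutoff_time_mult_lamV_at_top assms) simp
  moreover have "\<forall>\<^sub>F n in sequentially. 1 / 2 * (t n * lamV (V n) c) \<le> TV (V n) e * lamV (V n) c"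
    using eventually_cutoff_time_le_TV[OF assms(1,2)] eventually_less_V_top[of c]
  proof eventually_elim
    case (elim n)
    then have "t n / 2 * lamV (V n) c \<le> TV (V n) e * lamV (V n) c"
      using classV_function.lamV_pos[OF classV_function assms(3) elim(2)] by (intro mult_right_mono) auto
    then show ?case by simp
  qed
  ultimately show ?thesis by (rule filterlim_at_top_mono)
qed

lemma tauV_mult_lamV_at_top:
  assumes "cutoff_time (\<lambda>n. LV (V n)) t" "0 < c"
  shows "filterlim (\<lambda>n. tauV (V n) c * lamV (V n) c) at_top sequentially"
proof -
  have t: "\<And>n. 0 < t n" "\<forall>a. 0 < a \<and> a < 1 \<longrightarrow> filterlim (\<lambda>n. LV (V n) (a * t n)) at_top sequentially"
    using assms(1) unfolding cutoff_time_iff by auto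
  from t(2)[rule_format, of "1 / 2"]
  have "filterlim (\<lambda>n. LV (V n) (t n / 2)) at_top sequentially" by simp
  note large = eventually_ge_of_filterlim[OF this, of "2 * c + 3"]
  have "filterlim (\<lambda>n. 1 / 8 * (t n * lamV (V n) c)) at_top sequentially"
    by (intro filterlim_tendsto_pos_mult_at_top[OF tendsto_const]
          cutoff_time_mult_lamV_at_top assms) simp
  moreover have "\<forall>\<^sub>F n in sequentially. 1 / 8 * (t n * lamV (V n) c) \<le> tauV (V n) c * lamV (V n) c"
    using large eventually_ge_of_filterlim[OF cutoff_time_mult_lamV_at_top[OF assms], of 8]
      eventually_less_V_top[of c]
  proof eventually_elim
    case (elim n)
    interpret classV_function "V n" by (rule classV_function)
    have lam: "0 < lam c" using lamV_pos[OF assms(2) elim(3)] .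
    have "t n / 8 \<le> tau c"
    proof (rule ccontr)
      assume "\<not> t n / 8 \<le> tau c"
      then have "L (t n / 2) \<le> 2 * c + 2 * exp (- (t n / 2 * lam c / 4))"
        using elim by (intro LV_le_beyond_4_tauV assms(2)) auto
      also have "\<dots> \<le> 2 * c + 2" using t(1)[of n] lam by simp
      finally show False using elim(1) by simp
    qed
    then have "t n / 8 * lam c \<le> tau c * lam c" using lam by (intro mult_right_mono) auto
    then show ?case by simp
  qed
  ultimately show ?thesis by (rule filterlim_at_top_mono)
qed

lemma tauV_mult_lamV_at_top_of_TV:
  assumes "0 < e" "0 < c"
    and H: "\<forall>c>0. filterlim (\<lambda>n. TV (V n) e * lamV (V n) c) at_top sequentially"
  shows "filterlim (\<lambda>n. tauV (V n) (e / 4) * lamV (V n) c) at_top sequentially"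
proof -
  have "0 < e / 4" using assms by simp
  have "((\<lambda>n. 2 * exp (- (1 / 8 * (TV (V n) e * lamV (V n) (e / 4))))) \<longlongrightarrow> 0) sequentially"
    using H \<open>0 < e / 4\<close> by (intro tendsto_mult_right_zero tendsto_exp_neg_mult) simp_all
  note small = eventually_le_of_tendsto_0[OF this \<open>0 < e / 4\<close>]
  have "filterlim (\<lambda>n. 1 / 8 * (TV (V n) e * lamV (V n) c)) at_top sequentially"
    using H assms by (intro filterlim_tendsto_pos_mult_at_top[OF tendsto_const]) simp_all
  moreover have "\<forall>\<^sub>F n in sequentially. 1 / 8 * (TV (V n) e * lamV (V n) c) \<le> tauV (V n) (e / 4) * lamV (V n) c"
    using eventually_ge_of_filterlim[OF H[rule_format, OF \<open>0 < e / 4\<close>], of 8] small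
      eventually_less_V_top[of "e / 4"] eventually_less_V_top[of c]
  proof eventually_elim
    case (elim n)
    interpret classV_function "V n" by (rule classV_function)
    define T where "T = TV (V n) e"
    have lam: "0 < lam (e / 4)" "0 < lam c"
      using lamV_pos[OF \<open>0 < e / 4\<close> elim(3)] lamV_pos[OF assms(2) elim(4)] .
    have "0 < T" using elim(1) lam(1) unfolding T_def by (smt (verit) mult_nonpos_nonneg)
    have "T / 8 \<le> tau (e / 4)"
    proof (rule ccontr)
      assume "\<not> T / 8 \<le> tau (e / 4)"
      then have "L (T / 2) \<le> 2 * (e / 4) + 2 * exp (- (T / 2 * lam (e / 4) / 4))"
        using elim(1) by (intro LV_le_beyond_4_tauV \<open>0 < e / 4\<close> elim(3)) (auto simp: T_def)
      also have "\<dots> \<le> e / 2 + e / 4" using elim(2) by (simp add: T_def mult.commute)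
      finally have "L (T / 2) < e" using assms(1) by simp
      moreover have "e < L (T / 2)"
        using less_TV_imp_LV_gt[OF assms(1), of "T / 2"] \<open>0 < T\<close> by (simp add: T_def)
      ultimately show False by simp
    qed
    then have "T / 8 * lam c \<le> tau (e / 4) * lam c" using lam by (intro mult_right_mono) auto
    then show ?case by (simp add: T_def)
  qed
  ultimately show ?thesis by (rule filterlim_at_top_mono)
qed

lemma tauV_mult_lamV_at_top_levels:
  assumes H: "\<forall>c>0. filterlim (\<lambda>n. tauV (V n) c * lamV (V n) c) at_top sequentially"
    and "0 < c'" "0 < c"
  shows "filterlim (\<lambda>n. tauV (V n) c' * lamV (V n) c) at_top sequentially"
proof (cases "c' \<le> c")
  case True
  from H[rule_format, OF \<open>0 < c'\<close>] show ?thesis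
  proof (rule filterlim_at_top_mono)
    show "\<forall>\<^sub>F n in sequentially. tauV (V n) c' * lamV (V n) c' \<le> tauV (V n) c' * lamV (V n) c"
      using eventually_less_V_top[of c]
    proof eventually_elim
      case (elim n)
      interpret classV_function "V n" by (rule classV_function)
      show ?case
        using lamV_mono[OF elim True] tauV_pos[OF \<open>0 < c'\<close>] True elim by (intro mult_left_mono) auto
    qed
  qed
next
  case False
  show ?thesis unfolding filterlim_at_top
  proof
    fix Z :: real
    show "\<forall>\<^sub>F n in sequentially. Z \<le> tauV (V n) c' * lamV (V n) c"
      using eventually_ge_of_filterlim[OF H[rule_format, OF \<open>0 < c\<close>], of "max Z (ln (1 + c') + 1)"]
        eventually_less_V_top[of c']
    proof eventually_elim
      case (elim n)
      interpret classV_function "V n" by (rule classV_function)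
      have lam: "0 < lam c" using lamV_pos[OF \<open>0 < c\<close>] False elim(2) by simp
      have "tau c \<le> max (tau c') (ln (1 + c') / lam c)"
        using False elim(2) by (intro tauV_le_max \<open>0 < c\<close>) auto
      then have "tau c * lam c \<le> max (tau c' * lam c) (ln (1 + c'))"
        using lam by (auto simp: max_def pos_le_divide_eq mult_right_mono)
      then show ?case using elim(1) by linarith
    qed
  qed
qed

lemma eventually_TV_le_TV_plus:
  assumes H: "\<forall>c>0. filterlim (\<lambda>n. TV (V n) d * lamV (V n) c) at_top sequentially"
    and "0 < e" "0 < d" "0 < c"
  shows "\<forall>\<^sub>F n in sequentially. TV (V n) e \<le> TV (V n) d + 2 * ln (1 + 3 * d / e) / lamV (V n) c"
proof -
  define c' where "c' = min c (e / 3)"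
  have c': "0 < c'" "c' \<le> c" "c' \<le> e / 3" using assms by (auto simp: c'_def)
  have small: "((\<lambda>n. c * exp (- (1 / 2 * (TV (V n) d * lamV (V n) c')))) \<longlongrightarrow> 0) sequentially"
    using H c' by (intro tendsto_mult_right_zero tendsto_exp_neg_mult) simp_all
  have "0 < e / 3" using assms by simp
  from eventually_le_of_tendsto_0[OF small this] eventually_less_V_top[of c]
  show ?thesis
  proof eventually_elim
    case (elim n)
    interpret classV_function "V n" by (rule classV_function)
    define T where "T = TV (V n) d"
    \<comment> \<open>waiting \<open>s\<close> longer shrinks \<open>L T \<le> d\<close> by the factor \<open>1 / (1 + 3 d / e)\<close>,
        to below \<open>e / 3\<close>\<close>
    define s where "s = 2 * ln (1 + 3 * d / e) / lam c"
    have lam: "0 < lam c" using lamV_pos[OF assms(4) elim(2)] .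
    have T: "0 \<le> T" "L T \<le> d" using TV_nonneg[OF assms(3)] LV_TV_le[OF assms(3)] by (auto simp: T_def)
    have "0 \<le> s" using assms lam by (simp add: s_def)
    have "exp (- (s * lam c / 2)) = 1 / (1 + 3 * d / e)"
    proof -
      have "s * lam c / 2 = ln (1 + 3 * d / e)" using lam by (simp add: s_def)
      moreover have "0 < 1 + 3 * d / e" using assms by (simp add: add_pos_pos)
      ultimately show ?thesis by (simp add: exp_minus inverse_eq_divide)
    qed
    then have "L (T + s) \<le> c' + c * exp (- (1 / 2 * (T * lam c'))) + 1 / (1 + 3 * d / e) * L T"
      using LV_shift_le_levels[OF c'(1,2) elim(2) T(1) \<open>0 \<le> s\<close>] by (simp add: mult.commute)
    also have "1 / (1 + 3 * d / e) * L T \<le> e / 3"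
    proof -
      have "1 / (1 + 3 * d / e) * L T \<le> 1 / (1 + 3 * d / e) * d"
        using T(2) assms by (intro mult_left_mono) (auto simp: add_pos_pos less_imp_le)
      also have "\<dots> \<le> e / 3" using assms by (simp add: field_simps)
      finally show ?thesis .
    qed
    finally have "L (T + s) \<le> e" using elim(1) c'(3) by (simp add: T_def)
    then show ?case using TV_le[OF assms(2), of "T + s"] T(1) \<open>0 \<le> s\<close> by (simp add: T_def s_def)
  qed
qed

lemma TV_diff_bigo:
  assumes He: "\<forall>c>0. filterlim (\<lambda>n. TV (V n) e * lamV (V n) c) at_top sequentially"
    and Hd: "\<forall>c>0. filterlim (\<lambda>n. TV (V n) d * lamV (V n) c) at_top sequentially"
    and "0 < e" "0 < d" "0 < c"
  shows "(\<lambda>n. \<bar>TV (V n) e - TV (V n) d\<bar>) \<in> O(\<lambda>n. 1 / lamV (V n) c)"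
proof (rule bigoI)
  define K where "K = 2 * ln (1 + 3 * d / e) + 2 * ln (1 + 3 * e / d)"
  show "\<forall>\<^sub>F n in sequentially. norm \<bar>TV (V n) e - TV (V n) d\<bar> \<le> K * norm (1 / lamV (V n) c)"
    using eventually_TV_le_TV_plus[OF Hd assms(3-5)] eventually_TV_le_TV_plus[OF He assms(4,3,5)]
      eventually_less_V_top[of c]
  proof eventually_elim
    case (elim n)
    have lam: "0 < lamV (V n) c" using classV_function.lamV_pos[OF classV_function assms(5) elim(3)] .
    have "0 \<le> 2 * ln (1 + 3 * d / e) / lamV (V n) c" "0 \<le> 2 * ln (1 + 3 * e / d) / lamV (V n) c"
      using assms lam by simp_all
    then have "\<bar>TV (V n) e - TV (V n) d\<bar>
        \<le> 2 * ln (1 + 3 * d / e) / lamV (V n) c + 2 * ln (1 + 3 * e / d) / lamV (V n) c"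
      using elim(1,2) by linarith
    also have "\<dots> = K * (1 / lamV (V n) c)" by (simp add: K_def add_divide_distrib)
    finally show ?case using lam by simp
  qed
qed

lemma eventually_TV_le_tauV_plus:
  assumes H: "\<forall>c'>0. filterlim (\<lambda>n. tauV (V n) c * lamV (V n) c') at_top sequentially"
    and "0 < e" "0 < c"
  shows "\<forall>\<^sub>F n in sequentially. TV (V n) e \<le> tauV (V n) c + sqrt (tauV (V n) c / lamV (V n) c)"
proof -
  define c' where "c' = min c (e / 3)"
  have c': "0 < c'" "c' \<le> c" "c' \<le> e / 3" using assms by (auto simp: c'_def)
  have "0 < e / 3" using assms by simp
  have "((\<lambda>n. c * exp (- (1 / 2 * (tauV (V n) c * lamV (V n) c')))) \<longlongrightarrow> 0) sequentially"
    using H c' by (intro tendsto_mult_right_zero tendsto_exp_neg_mult) simp_all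
  note small_middle = eventually_le_of_tendsto_0[OF this \<open>0 < e / 3\<close>]
  define g where "g x = exp (1 + 1 / x) * exp (- x) / (1 - exp (- (1 / x)))" for x :: real
  have "(g \<longlongrightarrow> 0) at_top" unfolding g_def by real_asymp
  moreover have "filterlim (\<lambda>n. sqrt (tauV (V n) c * lamV (V n) c)) at_top sequentially"
    using H assms by (intro filterlim_compose[OF sqrt_at_top]) simp
  ultimately have "((\<lambda>n. g (sqrt (tauV (V n) c * lamV (V n) c))) \<longlongrightarrow> 0) sequentially"
    by (rule filterlim_compose)
  note small_tail = eventually_le_of_tendsto_0[OF this \<open>0 < e / 3\<close>]
  show ?thesis
    using eventually_ge_of_filterlim[of _ sequentially 2, OF H[rule_format, OF assms(3)]]
      small_middle small_tail eventually_less_V_top[of c]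
  proof eventually_elim
    case (elim n)
    interpret classV_function "V n" by (rule classV_function)
    have lam: "0 < lam c" using lamV_pos[OF assms(3) elim(4)] .
    have tau: "0 < tau c" using tauV_pos[OF assms(3) elim(4)] .
    define u where "u = sqrt (tau c / lam c)"
    define x where "x = sqrt (tau c * lam c)"
    have "0 < u" "0 < x" using lam tau by (simp_all add: u_def x_def)
    have "u * x = tau c"
      using lam tau by (simp add: u_def x_def real_sqrt_mult[symmetric] power2_eq_square)
    moreover have "u * lam c = x"
    proof -
      have "u * lam c = sqrt (tau c / lam c) * sqrt ((lam c)\<^sup>2)" using lam by (simp add: u_def)
      also have "\<dots> = sqrt (tau c / lam c * (lam c)\<^sup>2)" by (rule real_sqrt_mult[symmetric])
      also have "\<dots> = x" using lam by (simp add: x_def power2_eq_square)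
      finally show ?thesis .
    qed
    ultimately have "u / tau c = 1 / x" using tau \<open>0 < x\<close> by (auto simp: field_simps)
    have "L (tau c + u) \<le> c' + c * exp (- (tau c * lam c' / 2))
        + exp (1 + u / tau c) * exp (- (u * lam c)) / (1 - exp (- (u / tau c)))"
      by (rule LV_tauV_plus_le[OF c'(1,2) elim(4) elim(1) \<open>0 < u\<close>])
    also have "exp (1 + u / tau c) * exp (- (u * lam c)) / (1 - exp (- (u / tau c))) = g x"
      unfolding g_def \<open>u / tau c = 1 / x\<close> \<open>u * lam c = x\<close> ..
    finally have "L (tau c + u) \<le> e"
      using elim(2,3) c'(3) by (simp add: x_def mult.commute)
    then show ?case using TV_le[OF assms(2), of "tau c + u"] tau \<open>0 < u\<close> by (simp add: u_def)
  qed
qed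

lemma eventually_tauV_minus_le_TV:
  assumes "0 < e" "0 < c"
  shows "\<forall>\<^sub>F n in sequentially. tauV (V n) c - (2 + ln (1 + e)) / lamV (V n) c \<le> TV (V n) e"
  using eventually_less_V_top[of c]
proof eventually_elim
  case (elim n)
  interpret classV_function "V n" by (rule classV_function)
  have lam: "0 < lam c" using lamV_pos[OF assms(2) elim] .
  define t where "t = tau c - (2 + ln (1 + e)) / lam c"
  show ?case
  proof (cases "t < 0")
    case True
    then show ?thesis using TV_nonneg[OF assms(1)] by (simp add: t_def)
  next
    case False
    have "t \<le> tau c - 1 / lam c"
      using lam assms(1) by (simp add: t_def divide_right_mono)
    then have "exp ((tau c - 1 / lam c - t) * lam c) - 1 \<le> L t"
      using False lam by (intro LV_before_tauV_ge assms(2) elim) auto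
    moreover have "(tau c - 1 / lam c - t) * lam c = 1 + ln (1 + e)"
      using lam by (simp add: t_def field_simps)
    moreover have "exp (1 + ln (1 + e)) - 1 > e"
    proof -
      have "exp (1 + ln (1 + e)) = exp 1 * (1 + e)" using assms(1) by (simp add: exp_add)
      moreover have "1 * (1 + e) < exp 1 * (1 + e)" using assms(1) by (intro mult_strict_right_mono) auto
      ultimately show ?thesis by simp
    qed
    ultimately have "e < L t" by simp
    then show ?thesis
      using LV_antimono[of "TV (V n) e" t] TV_nonneg[OF assms(1)] LV_TV_le[OF assms(1)]
      unfolding t_def[symmetric] by force
  qed
qed

lemma TV_tauV_diff_bigo:
  assumes H: "\<forall>c'>0. filterlim (\<lambda>n. tauV (V n) c * lamV (V n) c') at_top sequentially"
    and "0 < e" "0 < c"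
  shows "(\<lambda>n. \<bar>TV (V n) e - tauV (V n) c\<bar>) \<in> O(\<lambda>n. sqrt (tauV (V n) c / lamV (V n) c))"
proof (rule bigoI)
  define K where "K = 2 + ln (1 + e)"
  have "1 \<le> K" using assms by (simp add: K_def)
  show "\<forall>\<^sub>F n in sequentially.
      norm \<bar>TV (V n) e - tauV (V n) c\<bar> \<le> (K + 1) * norm (sqrt (tauV (V n) c / lamV (V n) c))"
    using eventually_TV_le_tauV_plus[OF H assms(2,3)] eventually_tauV_minus_le_TV[OF assms(2,3)]
      eventually_less_V_top[of c]
      eventually_ge_of_filterlim[of _ sequentially 1, OF H[rule_format, OF assms(3)]]
  proof eventually_elim
    case (elim n)
    interpret classV_function "V n" by (rule classV_function)
    have lam: "0 < lam c" using lamV_pos[OF assms(3) elim(3)] .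
    have tau: "0 < tau c" using tauV_pos[OF assms(3) elim(3)] .
    define u where "u = sqrt (tau c / lam c)"
    have "0 \<le> u" using lam tau by (simp add: u_def)
    have "1 / lam c \<le> u"
      unfolding u_def
    proof (rule real_le_rsqrt)
      have "(1 / lam c)\<^sup>2 \<le> (tau c * lam c) * (1 / lam c) * (1 / lam c)"
        using elim(4) lam by (simp add: field_simps power2_eq_square)
      also have "\<dots> = tau c / lam c" using lam by (simp add: field_simps)
      finally show "(1 / lam c)\<^sup>2 \<le> tau c / lam c" .
    qed
    then have "K / lam c \<le> K * u" using \<open>1 \<le> K\<close> by (simp add: mult_left_mono divide_inverse)
    then have "tau c - TV (V n) e \<le> K * u" using elim(2) by (simp add: K_def)
    moreover have "TV (V n) e - tau c \<le> u" using elim(1) by (simp add: u_def)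
    moreover have "0 \<le> K * u" using \<open>1 \<le> K\<close> \<open>0 \<le> u\<close> by simp
    ultimately have "\<bar>TV (V n) e - tau c\<bar> \<le> (K + 1) * u"
      using \<open>0 \<le> u\<close> by (simp add: distrib_right abs_le_iff)
    then show ?case using \<open>0 \<le> u\<close> by (simp add: u_def)
  qed
qed

end

theorem theorem2p2:
  fixes V :: "nat \<Rightarrow> real \<Rightarrow> real"
  assumes hV: "\<And>n. V n \<in> classV"
    and hL: "filterlim (\<lambda>n. LV (V n) 0) at_top sequentially"
  defines "C1 \<equiv> has_cutoff (\<lambda>n. LV (V n))"
    and "C2 \<equiv> (\<forall>eps>0. \<forall>c>0.
                 filterlim (\<lambda>n. TV (V n) eps * lamV (V n) c) at_top sequentially)"
    and "C3 \<equiv> (\<exists>eps>0. \<forall>c>0.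
                 filterlim (\<lambda>n. TV (V n) eps * lamV (V n) c) at_top sequentially)"
    and "C4 \<equiv> (\<forall>c>0. filterlim (\<lambda>n. tauV (V n) c * lamV (V n) c) at_top sequentially)"
    and "C5 \<equiv> (\<forall>c'>0. \<forall>c>0.
                 filterlim (\<lambda>n. tauV (V n) c' * lamV (V n) c) at_top sequentially)"
    and "C6 \<equiv> (\<exists>c'>0. \<forall>c>0.
                 filterlim (\<lambda>n. tauV (V n) c' * lamV (V n) c) at_top sequentially)"
  shows "(C1 \<longleftrightarrow> C2) \<and> (C1 \<longleftrightarrow> C3) \<and> (C1 \<longleftrightarrow> C4) \<and> (C1 \<longleftrightarrow> C5) \<and> (C1 \<longleftrightarrow> C6)
         \<and> (C1 \<longrightarrow>
              (\<forall>c>0. \<exists>t. cutoff_time (\<lambda>n. LV (V n)) t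
                          \<and> (\<forall>\<^sub>F n in sequentially. t n = tauV (V n) c))
            \<and> (\<forall>eps>0. \<forall>delta>0. \<forall>c>0.
                 (\<lambda>n. \<bar>TV (V n) eps - TV (V n) delta\<bar>)
                   \<in> O(\<lambda>n. 1 / lamV (V n) c))
            \<and> (\<forall>eps>0. \<forall>c>0.
                 (\<lambda>n. \<bar>TV (V n) eps - tauV (V n) c\<bar>)
                   \<in> O(\<lambda>n. sqrt (tauV (V n) c / lamV (V n) c))))"
proof -
  interpret classV_sequence V using hV hL by unfold_locales
  have C2 if C1
    using that unfolding C1_def C2_def has_cutoff_def by (auto intro: TV_mult_lamV_at_top)
  moreover have C3 if C2
    using that unfolding C2_def C3_def by (intro exI[of _ 1]) auto
  moreover have C6 if C3
  proof -
    obtain e where "0 < e" "\<forall>c>0. filterlim (\<lambda>n. TV (V n) e * lamV (V n) c) at_top sequentially"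
      using \<open>C3\<close> unfolding C3_def by blast
    then show C6
      unfolding C6_def by (intro exI[of _ "e / 4"]) (auto intro: tauV_mult_lamV_at_top_of_TV)
  qed
  moreover have C1 if C6
    using that unfolding C6_def C1_def has_cutoff_def by (auto dest: cutoff_time_tauV)
  moreover have C4 if C1
    using that unfolding C1_def C4_def has_cutoff_def by (auto intro: tauV_mult_lamV_at_top)
  moreover have C5 if C4
    using that unfolding C4_def C5_def by (auto intro: tauV_mult_lamV_at_top_levels)
  moreover have C6 if C5
    using that unfolding C5_def C6_def by (intro exI[of _ 1]) auto
  moreover have "\<forall>c>0. \<exists>t. cutoff_time (\<lambda>n. LV (V n)) t \<and> (\<forall>\<^sub>F n in sequentially. t n = tauV (V n) c)"
    if C5 using that unfolding C5_def by (auto intro: cutoff_time_tauV)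
  moreover have "\<forall>eps>0. \<forall>delta>0. \<forall>c>0. (\<lambda>n. \<bar>TV (V n) eps - TV (V n) delta\<bar>) \<in> O(\<lambda>n. 1 / lamV (V n) c)"
    if C2 using that unfolding C2_def by (intro allI impI TV_diff_bigo) auto
  moreover have "\<forall>eps>0. \<forall>c>0. (\<lambda>n. \<bar>TV (V n) eps - tauV (V n) c\<bar>) \<in> O(\<lambda>n. sqrt (tauV (V n) c / lamV (V n) c))"
    if C5 using that unfolding C5_def by (blast intro: TV_tauV_diff_bigo)
  ultimately show ?thesis by blast
qed

end
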